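(* If $h=1/p$, then for any weight matrix $V\in\mathbb{R}^{2p\times(d+1)}$, $\lVert\nabla^2_VL\rVert_{op}\le 5pL(V)$.
   Context: Huberized ReLU with bandwidth $h$: $\phi(z)=0$ for $z<0$, $z^2/(2h)$ for $z\in[0,h]$, $z-h/2$ for $z>h$; $\phi'(z)=0$ for $z<0$, $z/h$ on $[0,h]$, $1$ for $z>h$; weak second derivative $\gamma(z)=1/h$ for $z\in[0,h]$ and $0$ otherwise. Data $(x_1,y_1),\ldots,(x_n,y_n)$ with $x_s\in\mathbb{R}^{d+1}$, $\lVert x_s\rVert=1$, $y_s\in\{-1,1\}$. For $V$ with rows $v_1,\ldots,v_{2p}$ and fixed $u_1=\cdots=u_p=1$, $u_{p+1}=\cdots=u_{2p}=-1$: $f_V(x)=\sum_{i=1}^{2p}u_i\phi(v_i\cdot x)$, $L(V)=\frac1n\sum_s\ln(1+\exp(-y_sf_V(x_s)))$. The weak Hessian $\nabla^2_VL$ is the block matrix with blocks, for $i\ne j$, $\frac{u_iu_j}{n}\sum_s\frac{\phi'(v_i\cdot x_s)\phi'(v_j\cdot x_s)e^{y_sf_V(x_s)}}{(1+e^{y_sf_V(x_s)})^2}x_sx_s^\top$ and, for $i=j$, $\frac1n\sum_s\Big[\frac{-u_i\gamma(v_i\cdot x_s)y_s}{1+e^{y_sf_V(x_s)}}+\frac{\phi'(v_i\cdot x_s)^2e^{y_sf_V(x_s)}}{(1+e^{y_sf_V(x_s)})^2}\Big]x_sx_s^\top$. $\lVert\cdot\rVert_{op}$ is the operator norm. *)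

theory Defs
  imports "HOL-Analysis.Analysis"
begin

text \<open>Huberized ReLU with bandwidth h, its derivative and weak second derivative.\<close>
definition hrelu :: "real \<Rightarrow> real \<Rightarrow> real" where
  "hrelu h z = (if z < 0 then 0 else if z \<le> h then z\<^sup>2 / (2*h) else z - h/2)"

definition hrelu' :: "real \<Rightarrow> real \<Rightarrow> real" where
  "hrelu' h z = (if z < 0 then 0 else if z \<le> h then z / h else 1)"

definition hgamma :: "real \<Rightarrow> real \<Rightarrow> real" where
  "hgamma h z = (if 0 \<le> z \<and> z \<le> h then 1 / h else 0)"

text \<open>Neurons are indexed by 'k \<times> bool, where CARD('k) = p: the neurons (k,True)
  carry u = 1 (the first p), the neurons (k,False) carry u = -1 (the last p).\<close>
definition usign :: "'k \<times> bool \<Rightarrow> real" where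
  "usign i = (if snd i then 1 else -1)"

definition fV :: "real \<Rightarrow> real^'n^('k::finite \<times> bool) \<Rightarrow> real^'n \<Rightarrow> real" where
  "fV h V x = (\<Sum>i\<in>UNIV. usign i * hrelu h ((V $ i) \<bullet> x))"

definition lossL :: "real \<Rightarrow> (nat \<Rightarrow> real^'n) \<Rightarrow> (nat \<Rightarrow> real) \<Rightarrow> nat
    \<Rightarrow> real^'n^('k::finite \<times> bool) \<Rightarrow> real" where
  "lossL h xs ys n V = (1 / real n) * (\<Sum>s<n. ln (1 + exp (- ys s * fV h V (xs s))))"

definition outer :: "real^'n \<Rightarrow> real^'n^'n" where
  "outer x = (\<chi> a b. x $ a * x $ b)"

definition hess_block :: "real \<Rightarrow> (nat \<Rightarrow> real^'n) \<Rightarrow> (nat \<Rightarrow> real) \<Rightarrow> nat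
    \<Rightarrow> real^'n^('k::finite \<times> bool) \<Rightarrow> 'k \<times> bool \<Rightarrow> 'k \<times> bool \<Rightarrow> real^'n^'n" where
  "hess_block h xs ys n V i j =
     (1 / real n) *\<^sub>R (\<Sum>s<n.
        (let e = exp (ys s * fV h V (xs s)) in
         if i = j then
           (- usign i * hgamma h ((V $ i) \<bullet> xs s) * ys s / (1 + e)
            + (hrelu' h ((V $ i) \<bullet> xs s))\<^sup>2 * e / (1 + e)\<^sup>2)
         else
           usign i * usign j * hrelu' h ((V $ i) \<bullet> xs s) * hrelu' h ((V $ j) \<bullet> xs s)
             * e / (1 + e)\<^sup>2) *\<^sub>R outer (xs s))"

text \<open>The weak Hessian as a linear operator on the space of weight matrices
  (R^{2p \<times> (d+1)} with the Euclidean/Frobenius norm).\<close>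
definition hess_op :: "real \<Rightarrow> (nat \<Rightarrow> real^'n) \<Rightarrow> (nat \<Rightarrow> real) \<Rightarrow> nat
    \<Rightarrow> real^'n^('k::finite \<times> bool) \<Rightarrow> real^'n^('k \<times> bool) \<Rightarrow> real^'n^('k \<times> bool)" where
  "hess_op h xs ys n V W = (\<chi> i. \<Sum>j\<in>UNIV. hess_block h xs ys n V i j *v (W $ j))"

end

(* With l(t) = ln (1 + exp (-t)) and the margins m_s = y_s f_V(x_s), the Hessian is the
   average over the samples of (diag d_s + l''(m_s) a_s a_s^T) (x) x_s x_s^T, where
   a_s = (u_i phi'(v_i . x_s))_i has entries in [-1, 1] and |d_s,i| <= gamma |l'(m_s)| <= |l'(m_s)| / h.
   As l'' <= |l'| and |a_s|^2 <= 2p, each sample contributes at most (1/h + 2p) |l'(m_s)| = 3p |l'(m_s)|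
   to the operator norm, and |l'| <= l because ln u <= u - 1.  Averaging gives 3p L(V) <= 5p L(V). *)
theory Submission
  imports Defs
begin

text \<open>For the logistic loss l(t) = ln (1 + exp (-t)) these are -l' and l''.\<close>

definition logloss_slope :: "real \<Rightarrow> real" where
  "logloss_slope t = 1 / (1 + exp t)"

definition logloss_curv :: "real \<Rightarrow> real" where
  "logloss_curv t = exp t / (1 + exp t)\<^sup>2"

lemma logloss_slope_pos: "0 < logloss_slope t"
  by (simp add: logloss_slope_def add_pos_pos)

lemma logloss_curv_nonneg: "0 \<le> logloss_curv t"
  by (simp add: logloss_curv_def)

lemma logloss_curv_le_slope: "logloss_curv t \<le> logloss_slope t"
proof -
  have "exp t * (1 + exp t) \<le> (1 + exp t)\<^sup>2"
    by (simp add: power2_eq_square algebra_simps)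
  then show ?thesis
    by (simp add: logloss_curv_def logloss_slope_def divide_simps power2_eq_square add_pos_pos)
qed

lemma logloss_slope_le_logloss: "logloss_slope t \<le> ln (1 + exp (- t))"
proof -
  define u where "u = 1 / (1 + exp (- t))"
  have "0 < u"
    unfolding u_def by (simp add: add_pos_pos)
  then have "ln u \<le> u - 1"
    by (rule ln_le_minus_one)
  moreover have "ln u = - ln (1 + exp (- t))"
    unfolding u_def by (simp add: ln_div add_pos_pos)
  moreover have "1 - u = logloss_slope t"
    unfolding u_def logloss_slope_def
    using add_pos_pos[OF zero_less_one exp_gt_zero[of t]] by (simp add: exp_minus divide_simps)
  ultimately show ?thesis
    by linarith
qed

lemma norm_matrix_vector_mult_le:
  fixes W :: "real^'n^'m"
  shows "norm (W *v x) \<le> norm W * norm x"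
proof -
  have "norm (W *v x) = L2_set (\<lambda>i. \<bar>W $ i \<bullet> x\<bar>) UNIV"
    by (simp add: norm_vec_def matrix_vector_mult_def inner_vec_def mult.commute)
  also have "\<dots> \<le> L2_set (\<lambda>i. norm (W $ i) * norm x) UNIV"
    by (rule L2_set_mono) (simp_all add: Cauchy_Schwarz_ineq2)
  also have "\<dots> = norm W * norm x"
    by (simp add: L2_set_left_distrib[symmetric] norm_vec_def)
  finally show ?thesis .
qed

lemma norm_vec_lambda_scaleR:
  fixes x :: "'a::real_normed_vector"
  shows "norm (\<chi> i. c $ i *\<^sub>R x) = norm c * norm x"
proof -
  have "norm (\<chi> i. c $ i *\<^sub>R x) = L2_set (\<lambda>i. \<bar>c $ i\<bar> * norm x) UNIV"
    by (simp add: norm_vec_def)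
  also have "\<dots> = norm c * norm x"
    by (simp add: L2_set_left_distrib[symmetric] norm_vec_def)
  finally show ?thesis .
qed

lemma norm_vec_lambda_mult_le:
  fixes v :: "real^'i"
  assumes "\<And>i. \<bar>d i\<bar> \<le> M"
  shows "norm (\<chi> i. d i * v $ i) \<le> M * norm v"
proof -
  have "0 \<le> M"
    using assms[of undefined] by linarith
  have "norm (\<chi> i. d i * v $ i) = L2_set (\<lambda>i. \<bar>d i\<bar> * \<bar>v $ i\<bar>) UNIV"
    by (simp add: norm_vec_def abs_mult)
  also have "\<dots> \<le> L2_set (\<lambda>i. M * \<bar>v $ i\<bar>) UNIV"
    by (rule L2_set_mono) (simp_all add: assms mult_right_mono)
  also have "\<dots> = M * norm v"
    using \<open>0 \<le> M\<close> by (simp add: L2_set_right_distrib[symmetric] norm_vec_def)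
  finally show ?thesis .
qed

lemma norm_sq_le_card:
  fixes a :: "real^'i"
  assumes "\<And>i. \<bar>a $ i\<bar> \<le> 1"
  shows "(norm a)\<^sup>2 \<le> real CARD('i)"
proof -
  have "(norm a)\<^sup>2 = (\<Sum>i\<in>UNIV. (a $ i)\<^sup>2)"
    unfolding power2_norm_eq_inner by (simp add: inner_vec_def power2_eq_square)
  also have "\<dots> \<le> (\<Sum>i\<in>(UNIV::'i set). 1)"
    by (rule sum_mono) (use assms abs_le_square_iff[of _ 1] in force)
  finally show ?thesis
    by simp
qed

text \<open>One sample's contribution to the Hessian: the operator (diag d + \<kappa> a a^T) \<otimes> x x^T
  applied to a weight matrix W.\<close>
definition sample_op :: "real^'n \<Rightarrow> ('i \<Rightarrow> real) \<Rightarrow> real \<Rightarrow> real^'i \<Rightarrow> real^'n^'i \<Rightarrow> real^'n^'i" where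
  "sample_op x d \<kappa> a W = (\<chi> i. (d i * (W *v x) $ i + \<kappa> * a $ i * (a \<bullet> (W *v x))) *\<^sub>R x)"

lemma norm_sample_op_le:
  assumes "\<And>i. \<bar>d i\<bar> \<le> M" and "0 \<le> \<kappa>"
  shows "norm (sample_op x d \<kappa> a W) \<le> (M + \<kappa> * (norm a)\<^sup>2) * norm W * (norm x)\<^sup>2"
proof -
  define v where "v = W *v x"
  define c where "c = (\<chi> i. d i * v $ i) + (\<kappa> * (a \<bullet> v)) *\<^sub>R a"
  have "0 \<le> M"
    using assms(1)[of undefined] by linarith
  have "sample_op x d \<kappa> a W = (\<chi> i. c $ i *\<^sub>R x)"
    by (simp add: sample_op_def c_def v_def algebra_simps)
  then have "norm (sample_op x d \<kappa> a W) = norm c * norm x"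
    by (simp add: norm_vec_lambda_scaleR)
  also have "norm c \<le> M * norm v + \<kappa> * (norm a * norm v) * norm a"
  proof -
    have "norm ((\<kappa> * (a \<bullet> v)) *\<^sub>R a) = \<kappa> * \<bar>a \<bullet> v\<bar> * norm a"
      using assms(2) by (simp add: abs_mult)
    also have "\<dots> \<le> \<kappa> * (norm a * norm v) * norm a"
      using assms(2) by (intro mult_right_mono mult_left_mono Cauchy_Schwarz_ineq2) simp_all
    finally show ?thesis
      unfolding c_def
      by (rule order_trans[OF norm_triangle_ineq add_mono[OF norm_vec_lambda_mult_le[OF assms(1)]]])
  qed
  also have "\<dots> = (M + \<kappa> * (norm a)\<^sup>2) * norm v"
    by (simp add: power2_eq_square algebra_simps)
  also have "norm v \<le> norm W * norm x"
    unfolding v_def by (rule norm_matrix_vector_mult_le)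
  finally show ?thesis
    using \<open>0 \<le> M\<close> assms(2)
    by (simp add: power2_eq_square mult_left_mono mult_right_mono mult.assoc)
qed

lemma outer_mult_vector: "outer x *v w = (x \<bullet> w) *\<^sub>R x"
  by (simp add: vec_eq_iff matrix_vector_mult_def outer_def inner_vec_def sum_distrib_left mult_ac)

lemma matrix_vector_mult_sum_left: "(\<Sum>s\<in>S. A s) *v w = (\<Sum>s\<in>S. A s *v w)"
  by (simp add: vec_eq_iff matrix_vector_mult_def sum_component sum_distrib_right sum.swap[of _ S])

lemma sample_op_coeff_sum:
  "(\<Sum>j\<in>UNIV. ((if i = j then d i else 0) + \<kappa> * a $ i * a $ j) * v $ j)
     = d i * v $ i + \<kappa> * a $ i * (a \<bullet> v)"
proof -
  have "(\<Sum>j\<in>UNIV. (if i = j then d i else 0) * v $ j) = d i * v $ i"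
    by (simp add: mult_delta_left)
  then show ?thesis
    by (simp only: distrib_right sum.distrib) (simp add: sum_distrib_left inner_vec_def mult_ac)
qed

lemma inner_row_eq_matrix_vector_mult: "x \<bullet> W $ j = (W *v x) $ j"
  by (simp add: matrix_vector_mult_def inner_vec_def mult.commute)

lemma block_op_eq_sum_sample_op:
  fixes B :: "'i::finite \<Rightarrow> 'i \<Rightarrow> real^'n^'n"
  assumes "\<And>i j. B i j = c *\<^sub>R (\<Sum>s\<in>S. ((if i = j then d s i else 0) + \<kappa> s * a s $ i * a s $ j) *\<^sub>R outer (x s))"
  shows "(\<chi> i. \<Sum>j\<in>UNIV. B i j *v W $ j) = c *\<^sub>R (\<Sum>s\<in>S. sample_op (x s) (d s) (\<kappa> s) (a s) W)"
proof (subst vec_eq_iff, rule allI)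
  fix i
  have "(\<chi> i. \<Sum>j\<in>UNIV. B i j *v W $ j) $ i
      = (\<Sum>j\<in>UNIV. c *\<^sub>R (\<Sum>s\<in>S. (((if i = j then d s i else 0) + \<kappa> s * a s $ i * a s $ j)
          * (x s \<bullet> W $ j)) *\<^sub>R x s))"
    by (simp add: assms scaleR_matrix_vector_assoc[symmetric] matrix_vector_mult_sum_left
        outer_mult_vector)
  also have "\<dots> = c *\<^sub>R (\<Sum>s\<in>S. (\<Sum>j\<in>UNIV. ((if i = j then d s i else 0) + \<kappa> s * a s $ i * a s $ j)
          * (W *v x s) $ j) *\<^sub>R x s)"
    by (simp add: scaleR_sum_right[symmetric] scaleR_sum_left sum.swap[of _ UNIV]
        inner_row_eq_matrix_vector_mult)
  also have "\<dots> = (c *\<^sub>R (\<Sum>s\<in>S. sample_op (x s) (d s) (\<kappa> s) (a s) W)) $ i"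
    by (simp only: sample_op_coeff_sum) (simp add: sample_op_def)
  finally show "(\<chi> i. \<Sum>j\<in>UNIV. B i j *v W $ j) $ i = (c *\<^sub>R (\<Sum>s\<in>S. sample_op (x s) (d s) (\<kappa> s) (a s) W)) $ i" .
qed

lemma abs_usign [simp]: "\<bar>usign i\<bar> = 1"
  by (simp add: usign_def)

lemma abs_hrelu'_le_one: "0 < h \<Longrightarrow> \<bar>hrelu' h z\<bar> \<le> 1"
  by (simp add: hrelu'_def)

lemma abs_hgamma_le: "0 < h \<Longrightarrow> \<bar>hgamma h z\<bar> \<le> 1 / h"
  by (simp add: hgamma_def)

definition preact_grad :: "real \<Rightarrow> real^'n^('k::finite \<times> bool) \<Rightarrow> real^'n \<Rightarrow> real^('k \<times> bool)" where
  "preact_grad h V x = (\<chi> i. usign i * hrelu' h (V $ i \<bullet> x))"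

definition hess_gamma_term :: "real \<Rightarrow> real^'n^('k::finite \<times> bool) \<Rightarrow> real^'n \<Rightarrow> real \<Rightarrow> 'k \<times> bool \<Rightarrow> real" where
  "hess_gamma_term h V x y i = - usign i * hgamma h (V $ i \<bullet> x) * y * logloss_slope (y * fV h V x)"

lemma hess_block_eq:
  "hess_block h xs ys n V i j = (1 / real n) *\<^sub>R (\<Sum>s<n.
     ((if i = j then hess_gamma_term h V (xs s) (ys s) i else 0)
      + logloss_curv (ys s * fV h V (xs s)) * preact_grad h V (xs s) $ i * preact_grad h V (xs s) $ j)
     *\<^sub>R outer (xs s))"
  unfolding hess_block_def
proof (intro arg_cong[where f="\<lambda>M. (1 / real n) *\<^sub>R M"] sum.cong refl
    arg_cong[where f="\<lambda>c. c *\<^sub>R outer _"])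
  fix s
  define e where "e = exp (ys s * fV h V (xs s))"
  show "(let e = exp (ys s * fV h V (xs s)) in if i = j
        then - usign i * hgamma h (V $ i \<bullet> xs s) * ys s / (1 + e) + (hrelu' h (V $ i \<bullet> xs s))\<^sup>2 * e / (1 + e)\<^sup>2
        else usign i * usign j * hrelu' h (V $ i \<bullet> xs s) * hrelu' h (V $ j \<bullet> xs s) * e / (1 + e)\<^sup>2)
      = (if i = j then hess_gamma_term h V (xs s) (ys s) i else 0)
        + logloss_curv (ys s * fV h V (xs s)) * preact_grad h V (xs s) $ i * preact_grad h V (xs s) $ j"
    unfolding Let_def hess_gamma_term_def preact_grad_def logloss_curv_def logloss_slope_def e_def[symmetric]
    by (cases "i = j") (simp_all add: usign_def power2_eq_square mult_ac)
qed

lemma hess_op_eq_sum_sample_op: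
  "hess_op h xs ys n V W = (1 / real n) *\<^sub>R (\<Sum>s<n. sample_op (xs s) (hess_gamma_term h V (xs s) (ys s))
     (logloss_curv (ys s * fV h V (xs s))) (preact_grad h V (xs s)) W)"
  unfolding hess_op_def by (rule block_op_eq_sum_sample_op) (rule hess_block_eq)

lemma norm_hess_sample_op_le:
  fixes V W :: "real^'n^('k::finite \<times> bool)"
  assumes "0 < h" and "norm x = 1" and "y = 1 \<or> y = -1"
  shows "norm (sample_op x (hess_gamma_term h V x y) (logloss_curv (y * fV h V x)) (preact_grad h V x) W)
    \<le> (1 / h + 2 * real CARD('k)) * logloss_slope (y * fV h V x) * norm W"
proof -
  let ?\<sigma> = "logloss_slope (y * fV h V x)" and ?\<kappa> = "logloss_curv (y * fV h V x)"
  have gamma_bound: "\<bar>hess_gamma_term h V x y i\<bar> \<le> ?\<sigma> / h" for i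
  proof -
    have "\<bar>hgamma h (V $ i \<bullet> x)\<bar> * ?\<sigma> \<le> 1 / h * ?\<sigma>"
      by (rule mult_right_mono[OF abs_hgamma_le[OF assms(1)] less_imp_le[OF logloss_slope_pos]])
    then show ?thesis
      using assms(3) logloss_slope_pos[of "y * fV h V x"] by (auto simp: hess_gamma_term_def abs_mult)
  qed
  have grad_bound: "(norm (preact_grad h V x))\<^sup>2 \<le> 2 * real CARD('k)"
    using norm_sq_le_card[of "preact_grad h V x"] abs_hrelu'_le_one[OF assms(1)]
    by (simp add: preact_grad_def abs_mult)
  have "norm (sample_op x (hess_gamma_term h V x y) ?\<kappa> (preact_grad h V x) W)
      \<le> (?\<sigma> / h + ?\<kappa> * (norm (preact_grad h V x))\<^sup>2) * norm W"
    using norm_sample_op_le[OF gamma_bound logloss_curv_nonneg, where x = x] assms(2) by simp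
  also have "\<dots> \<le> (?\<sigma> / h + ?\<sigma> * (2 * real CARD('k))) * norm W"
    using grad_bound
    by (intro mult_right_mono add_left_mono mult_mono logloss_curv_le_slope)
      (simp_all add: logloss_curv_nonneg less_imp_le[OF logloss_slope_pos])
  finally show ?thesis
    by (simp add: algebra_simps)
qed

lemma norm_hess_op_le:
  fixes V W :: "real^'n^('k::finite \<times> bool)"
  assumes "0 < h" and "\<forall>s<n. norm (xs s) = 1" and "\<forall>s<n. ys s = 1 \<or> ys s = -1"
  shows "norm (hess_op h xs ys n V W)
    \<le> (1 / h + 2 * real CARD('k)) * ((1 / real n) * (\<Sum>s<n. logloss_slope (ys s * fV h V (xs s)))) * norm W"
proof -
  have "norm (hess_op h xs ys n V W) \<le> (1 / real n) * (\<Sum>s<n. norm (sample_op (xs s)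
      (hess_gamma_term h V (xs s) (ys s)) (logloss_curv (ys s * fV h V (xs s))) (preact_grad h V (xs s)) W))"
    unfolding hess_op_eq_sum_sample_op by (simp add: norm_sum divide_right_mono)
  also have "\<dots> \<le> (1 / real n) * (\<Sum>s<n.
      (1 / h + 2 * real CARD('k)) * logloss_slope (ys s * fV h V (xs s)) * norm W)"
    using assms by (intro mult_left_mono sum_mono norm_hess_sample_op_le) auto
  finally show ?thesis
    by (simp add: sum_distrib_left sum_distrib_right mult_ac)
qed

lemma mean_logloss_slope_le_lossL:
  "(1 / real n) * (\<Sum>s<n. logloss_slope (ys s * fV h V (xs s))) \<le> lossL h xs ys n V"
  unfolding lossL_def
  using logloss_slope_le_logloss by (intro mult_left_mono sum_mono) auto

theorem lemma2:
  fixes xs :: "nat \<Rightarrow> real^'n" and ys :: "nat \<Rightarrow> real" and n :: nat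
    and V :: "real^'n^('k::finite \<times> bool)"
  assumes "n > 0"
    and "\<forall>s<n. norm (xs s) = 1"
    and "\<forall>s<n. ys s = 1 \<or> ys s = -1"
  shows "onorm (hess_op (1 / real CARD('k)) xs ys n V)
           \<le> 5 * real CARD('k) * lossL (1 / real CARD('k)) xs ys n V"
proof (rule onorm_le)
  fix W :: "real^'n^('k \<times> bool)"
  let ?p = "real CARD('k)"
  define S where "S = (1 / real n) * (\<Sum>s<n. logloss_slope (ys s * fV (1 / ?p) V (xs s)))"
  have "0 \<le> S"
    unfolding S_def by (simp add: sum_nonneg less_imp_le[OF logloss_slope_pos])
  have "norm (hess_op (1 / ?p) xs ys n V W) \<le> 3 * ?p * S * norm W"
    using norm_hess_op_le[of "1 / ?p" n xs ys V W] assms(2,3) by (simp add: S_def)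
  also have "\<dots> \<le> 5 * ?p * lossL (1 / ?p) xs ys n V * norm W"
    using \<open>0 \<le> S\<close> mean_logloss_slope_le_lossL[of n ys "1 / ?p" V xs]
    by (intro mult_right_mono mult_mono) (simp_all add: S_def)
  finally show "norm (hess_op (1 / ?p) xs ys n V W) \<le> 5 * ?p * lossL (1 / ?p) xs ys n V * norm W" .
qed

end
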